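(* Let $p$ be a prime, $K\in\{\mathbb Z_{(p)},\mathbb Z_p\}$, $F$ a field containing $K$, $G=\langle a\rangle\cong C_{p^2}$, $\Phi(x)=x^{p-1}+\dots+x+1$, and let $U_0=KC_{p^2}\Phi(a)$ be the submodule of $KC_{p^2}$ generated by $\Phi(a)$. Then for every $1$-cocycle $T:C_{p^2}\to\widehat{U_0}$ the group $\mathrm{Crys}(C_{p^2};U_0;T)$ contains an element of order $p$.
   Context: $FM=F\otimes_KM$, $\widehat M=FM/M$ with $g(x+M)=gx+M$; a $1$-cocycle is $T:G\to\widehat M$ with $T(gh)=gT(h)+T(g)$. $\mathrm{Crys}(G;M;T)=\{(g,x):g\in G,\ x\in FM,\ x+M=T(g)\}$ with $(g,x)(g',x')=(gg',g'x+x')$. *)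

theory Defs
  imports Complex_Main "HOL-Computational_Algebra.Primes"
begin

text \<open>Z_(p): the localisation of Z at p, as a subring of the rationals.\<close>
definition Zloc :: "nat \<Rightarrow> rat set" where
  "Zloc p = {q. \<not> int p dvd snd (quotient_of q)}"

text \<open>Z_p: the p-adic integers, as compatible sequences of residues (x n mod p^n).\<close>
definition Zp :: "nat \<Rightarrow> (nat \<Rightarrow> int) set" where
  "Zp p = {x. \<forall>n. 0 \<le> x n \<and> x n < int p ^ n \<and> x n = x (Suc n) mod int p ^ n}"

definition zp_add :: "nat \<Rightarrow> (nat \<Rightarrow> int) \<Rightarrow> (nat \<Rightarrow> int) \<Rightarrow> (nat \<Rightarrow> int)" where
  "zp_add p x y = (\<lambda>n. (x n + y n) mod int p ^ n)"

definition zp_mult :: "nat \<Rightarrow> (nat \<Rightarrow> int) \<Rightarrow> (nat \<Rightarrow> int) \<Rightarrow> (nat \<Rightarrow> int)" where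
  "zp_mult p x y = (\<lambda>n. (x n * y n) mod int p ^ n)"

definition zp_one :: "nat \<Rightarrow> (nat \<Rightarrow> int)" where
  "zp_one p = (\<lambda>n. 1 mod int p ^ n)"

definition ring_embedding_on ::
  "'a set \<Rightarrow> ('a \<Rightarrow> 'a \<Rightarrow> 'a) \<Rightarrow> ('a \<Rightarrow> 'a \<Rightarrow> 'a) \<Rightarrow> 'a \<Rightarrow> ('a \<Rightarrow> 'f::field) \<Rightarrow> bool" where
  "ring_embedding_on A addop multop oneop \<phi> \<longleftrightarrow>
     inj_on \<phi> A \<and> \<phi> oneop = 1 \<and>
     (\<forall>x\<in>A. \<forall>y\<in>A. \<phi> (addop x y) = \<phi> x + \<phi> y \<and> \<phi> (multop x y) = \<phi> x * \<phi> y)"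

definition is_K :: "nat \<Rightarrow> 'f::field set \<Rightarrow> bool" where
  "is_K p K \<longleftrightarrow>
     (\<exists>\<psi>::rat \<Rightarrow> 'f. ring_embedding_on (Zloc p) (+) (*) 1 \<psi> \<and> K = \<psi> ` Zloc p) \<or>
     (\<exists>\<phi>::(nat \<Rightarrow> int) \<Rightarrow> 'f. ring_embedding_on (Zp p) (zp_add p) (zp_mult p) (zp_one p) \<phi>
                                \<and> K = \<phi> ` Zp p)"

text \<open>An element of FG is x = sum_{i<n} x i * a^i, stored as a function vanishing for i >= n.
  The group element a^g is represented by g < n.\<close>
definition FG :: "nat \<Rightarrow> (nat \<Rightarrow> 'f::field) set" where
  "FG n = {x. \<forall>i\<ge>n. x i = 0}"

definition RG :: "nat \<Rightarrow> 'f::field set \<Rightarrow> (nat \<Rightarrow> 'f) set" where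
  "RG n R = {x \<in> FG n. \<forall>i<n. x i \<in> R}"

text \<open>Action of a^g: (a^g x) has coefficient x_{i-g} at a^i.\<close>
definition gact :: "nat \<Rightarrow> nat \<Rightarrow> (nat \<Rightarrow> 'f::field) \<Rightarrow> (nat \<Rightarrow> 'f)" where
  "gact n g x = (\<lambda>i. if i < n then x ((i + n - g mod n) mod n) else 0)"

definition conv :: "nat \<Rightarrow> (nat \<Rightarrow> 'f::field) \<Rightarrow> (nat \<Rightarrow> 'f) \<Rightarrow> (nat \<Rightarrow> 'f)" where
  "conv n x y = (\<lambda>i. if i < n then (\<Sum>j<n. x j * y ((i + n - j) mod n)) else 0)"

definition Phi :: "nat \<Rightarrow> (nat \<Rightarrow> 'f::field)" where
  "Phi p = (\<lambda>i. if i < p then 1 else 0)"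

definition U0 :: "nat \<Rightarrow> 'f::field set \<Rightarrow> (nat \<Rightarrow> 'f) set" where
  "U0 p K = {conv (p^2) c (Phi p) | c. c \<in> RG (p^2) K}"

text \<open>FM = F (x)_K M, realised as the F-span of M inside FG.\<close>
definition Fspan :: "(nat \<Rightarrow> 'f::field) set \<Rightarrow> (nat \<Rightarrow> 'f) set" where
  "Fspan M = {x. \<exists>S c. finite S \<and> S \<subseteq> M \<and> x = (\<lambda>i. \<Sum>m\<in>S. c m * m i)}"

definition coset :: "(nat \<Rightarrow> 'f::field) set \<Rightarrow> (nat \<Rightarrow> 'f) \<Rightarrow> (nat \<Rightarrow> 'f) set" where
  "coset M x = {(\<lambda>i. x i + m i) | m. m \<in> M}"

definition hat :: "(nat \<Rightarrow> 'f::field) set \<Rightarrow> (nat \<Rightarrow> 'f) set set" where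
  "hat M = {coset M x | x. x \<in> Fspan M}"

definition cadd :: "(nat \<Rightarrow> 'f::field) set \<Rightarrow> (nat \<Rightarrow> 'f) set \<Rightarrow> (nat \<Rightarrow> 'f) set" where
  "cadd A B = {(\<lambda>i. a i + b i) | a b. a \<in> A \<and> b \<in> B}"

definition cact :: "nat \<Rightarrow> nat \<Rightarrow> (nat \<Rightarrow> 'f::field) set \<Rightarrow> (nat \<Rightarrow> 'f) set" where
  "cact n g A = gact n g ` A"

definition cocycle :: "nat \<Rightarrow> (nat \<Rightarrow> 'f::field) set \<Rightarrow> (nat \<Rightarrow> (nat \<Rightarrow> 'f) set) \<Rightarrow> bool" where
  "cocycle n M T \<longleftrightarrow>
     (\<forall>g<n. T g \<in> hat M) \<and>
     (\<forall>g<n. \<forall>h<n. T ((g + h) mod n) = cadd (cact n g (T h)) (T g))"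

definition Crys :: "nat \<Rightarrow> (nat \<Rightarrow> 'f::field) set \<Rightarrow> (nat \<Rightarrow> (nat \<Rightarrow> 'f) set)
                     \<Rightarrow> (nat \<times> (nat \<Rightarrow> 'f)) set" where
  "Crys n M T = {(g, x). g < n \<and> x \<in> Fspan M \<and> coset M x = T g}"

definition crys_mult :: "nat \<Rightarrow> nat \<times> (nat \<Rightarrow> 'f::field) \<Rightarrow> nat \<times> (nat \<Rightarrow> 'f) \<Rightarrow> nat \<times> (nat \<Rightarrow> 'f)" where
  "crys_mult n e e' = ((fst e + fst e') mod n, (\<lambda>i. gact n (fst e') (snd e) i + snd e' i))"

definition crys_one :: "nat \<times> (nat \<Rightarrow> 'f::field)" where
  "crys_one = (0, (\<lambda>i. 0))"

definition crys_pow :: "nat \<Rightarrow> nat \<times> (nat \<Rightarrow> 'f::field) \<Rightarrow> nat \<Rightarrow> nat \<times> (nat \<Rightarrow> 'f)" where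
  "crys_pow n e k = ((crys_mult n e) ^^ k) crys_one"

end

theory Submission
  imports Defs "HOL-Library.Function_Algebras"
begin

text \<open>
  For \<open>(a^p, x)\<close> in Crys the \<open>p\<close>-th power is \<open>(1, N x)\<close>, where \<open>N = \<Sum>k<p. a^(k p)\<close> is the
  norm of the subgroup of order \<open>p\<close>; so it suffices to find a representative \<open>x\<close> of \<open>T(a^p)\<close>
  with \<open>N x = 0\<close>. Iterating the cocycle identity puts \<open>N x\<close> into \<open>T(1)\<close>, which is the zero
  coset \<open>U\<^sub>0\<close>. On the other hand \<open>N (c \<Phi>(a))\<close> is the coefficient sum of \<open>c\<close> times
  \<open>\<Sum>g\<in>G. g\<close>, because the translates \<open>a^(k p) \<Phi>(a)\<close> tile \<open>G\<close>; by linearity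
  \<open>N x = l \<Sum>g\<in>G. g\<close>, and \<open>l \<in> K\<close> because \<open>N x \<in> U\<^sub>0\<close>. Then \<open>x - l \<Phi>(a)\<close> is a
  representative of the same coset with vanishing norm. Only the additive group structure of
  \<open>K\<close> enters.
\<close>

definition additive_subgroup :: "'a::ab_group_add set \<Rightarrow> bool" where
  "additive_subgroup A \<longleftrightarrow> 0 \<in> A \<and> (\<forall>a\<in>A. \<forall>b\<in>A. a + b \<in> A) \<and> (\<forall>a\<in>A. - a \<in> A)"

lemma additive_subgroup_image:
  fixes \<phi> :: "'a \<Rightarrow> 'b::ab_group_add"
  assumes closed: "\<And>x y. x \<in> A \<Longrightarrow> y \<in> A \<Longrightarrow> add x y \<in> A"
    and hom: "\<And>x y. x \<in> A \<Longrightarrow> y \<in> A \<Longrightarrow> \<phi> (add x y) = \<phi> x + \<phi> y"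
    and zero: "z \<in> A" "add z z = z"
    and inverse: "\<And>x. x \<in> A \<Longrightarrow> neg x \<in> A" "\<And>x. x \<in> A \<Longrightarrow> add x (neg x) = z"
  shows "additive_subgroup (\<phi> ` A)"
proof -
  have "\<phi> z = \<phi> z + \<phi> z" using hom[OF zero(1) zero(1)] zero(2) by simp
  hence \<phi>z: "\<phi> z = 0" by simp
  have \<phi>neg: "\<phi> (neg x) = - \<phi> x" if "x \<in> A" for x
    using hom[OF that inverse(1)[OF that]] inverse(2)[OF that] \<phi>z
    by (simp add: eq_neg_iff_add_eq_0 add.commute)
  show ?thesis
    unfolding additive_subgroup_def
  proof (intro conjI ballI)
    show "0 \<in> \<phi> ` A" by (rule rev_image_eqI[OF zero(1)]) (simp add: \<phi>z)
  next
    fix a b assume "a \<in> \<phi> ` A" "b \<in> \<phi> ` A"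
    then obtain x y where "x \<in> A" "y \<in> A" "a = \<phi> x" "b = \<phi> y" by blast
    then show "a + b \<in> \<phi> ` A" by (intro rev_image_eqI[OF closed[of x y]]) (simp_all add: hom)
  next
    fix a assume "a \<in> \<phi> ` A"
    then obtain x where "x \<in> A" "a = \<phi> x" by blast
    then show "- a \<in> \<phi> ` A" by (intro rev_image_eqI[OF inverse(1)[of x]]) (simp_all add: \<phi>neg)
  qed
qed

lemma Zloc_add:
  assumes "prime p" "x \<in> Zloc p" "y \<in> Zloc p"
  shows "x + y \<in> Zloc p"
proof -
  obtain a c where qx: "quotient_of x = (a, c)" by force
  obtain b d where qy: "quotient_of y = (b, d)" by force
  have "c > 0" "d > 0" using qx qy quotient_of_denom_pos by blast+
  then have "snd (quotient_of (x + y)) = (c * d) div gcd (a * d + b * c) (c * d)"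
    by (simp add: rat_plus_code qx qy normalize_def Let_def)
  then have "snd (quotient_of (x + y)) dvd c * d"
    by (metis dvd_div_mult_self dvd_triv_left gcd_dvd2)
  moreover have "\<not> int p dvd c * d"
    using assms qx qy by (simp add: Zloc_def prime_dvd_mult_iff)
  ultimately show ?thesis
    unfolding Zloc_def using dvd_trans by blast
qed

lemma Zloc_uminus: "x \<in> Zloc p \<Longrightarrow> - x \<in> Zloc p"
  by (cases "quotient_of x") (simp add: Zloc_def rat_uminus_code)

definition zp_uminus :: "nat \<Rightarrow> (nat \<Rightarrow> int) \<Rightarrow> (nat \<Rightarrow> int)" where
  "zp_uminus p x = (\<lambda>n. (- x n) mod int p ^ n)"

lemma Zp_add:
  assumes "0 < p" "x \<in> Zp p" "y \<in> Zp p"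
  shows "zp_add p x y \<in> Zp p"
  unfolding Zp_def mem_Collect_eq
proof (intro allI conjI)
  fix n
  have "x n = x (Suc n) mod int p ^ n" "y n = y (Suc n) mod int p ^ n"
    using assms(2,3) unfolding Zp_def by blast+
  then show "zp_add p x y n = zp_add p x y (Suc n) mod int p ^ n"
    unfolding zp_add_def by (simp add: mod_mod_cancel mod_add_eq)
qed (use assms(1) in \<open>simp_all add: zp_add_def\<close>)

lemma Zp_uminus:
  assumes "0 < p" "x \<in> Zp p"
  shows "zp_uminus p x \<in> Zp p"
  unfolding Zp_def mem_Collect_eq
proof (intro allI conjI)
  fix n
  have "x n = x (Suc n) mod int p ^ n"
    using assms(2) unfolding Zp_def by blast
  then show "zp_uminus p x n = zp_uminus p x (Suc n) mod int p ^ n"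
    unfolding zp_uminus_def by (simp add: mod_mod_cancel mod_minus_eq)
qed (use assms(1) in \<open>simp_all add: zp_uminus_def\<close>)

lemma is_K_additive_subgroup:
  assumes "prime p" "is_K p K"
  shows "additive_subgroup K"
  using assms(2) unfolding is_K_def
proof (elim disjE exE conjE)
  fix \<psi> :: "rat \<Rightarrow> 'a"
  assume "ring_embedding_on (Zloc p) (+) (*) 1 \<psi>" and K: "K = \<psi> ` Zloc p"
  then have "\<psi> (x + y) = \<psi> x + \<psi> y" if "x \<in> Zloc p" "y \<in> Zloc p" for x y
    using that by (simp add: ring_embedding_on_def)
  moreover have "(0::rat) \<in> Zloc p"
    using prime_gt_1_nat[OF assms(1)] by (simp add: Zloc_def)
  ultimately show ?thesis
    unfolding K using Zloc_add[OF assms(1)] Zloc_uminus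
    by (intro additive_subgroup_image[where add = "(+)" and z = 0 and neg = uminus]) simp_all
next
  fix \<phi> :: "(nat \<Rightarrow> int) \<Rightarrow> 'a"
  assume "ring_embedding_on (Zp p) (zp_add p) (zp_mult p) (zp_one p) \<phi>" and K: "K = \<phi> ` Zp p"
  then have "\<phi> (zp_add p x y) = \<phi> x + \<phi> y" if "x \<in> Zp p" "y \<in> Zp p" for x y
    using that by (simp add: ring_embedding_on_def)
  moreover have p: "0 < p" using assms(1) prime_gt_0_nat by blast
  moreover have "(\<lambda>n. 0) \<in> Zp p" using p by (simp add: Zp_def)
  moreover have "zp_add p x (zp_uminus p x) = (\<lambda>n. 0)" for x
    by (simp add: zp_add_def zp_uminus_def mod_add_right_eq)
  ultimately show ?thesis
    unfolding K using Zp_add Zp_uminus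
    by (intro additive_subgroup_image[where add = "zp_add p" and z = "\<lambda>n. 0" and neg = "zp_uminus p"])
       (simp_all add: zp_add_def)
qed

lemma additive_subgroup_sum:
  assumes "additive_subgroup A" "\<And>j. j \<in> S \<Longrightarrow> f j \<in> A"
  shows "sum f S \<in> A"
  using assms(2)
  by (induction S rule: infinite_finite_induct) (use assms(1) in \<open>simp_all add: additive_subgroup_def\<close>)

lemma additive_subgroup_funD:
  fixes M :: "('a \<Rightarrow> 'b::ab_group_add) set"
  assumes "additive_subgroup M"
  shows "(\<lambda>i. 0) \<in> M"
    and "a \<in> M \<Longrightarrow> b \<in> M \<Longrightarrow> (\<lambda>i. a i + b i) \<in> M"
    and "a \<in> M \<Longrightarrow> (\<lambda>i. - a i) \<in> M"
  using assms by (simp_all add: additive_subgroup_def zero_fun_def plus_fun_def fun_Compl_def)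

lemma additive_subgroup_funI:
  fixes M :: "('a \<Rightarrow> 'b::ab_group_add) set"
  assumes "(\<lambda>i. 0) \<in> M"
    and "\<And>a b. a \<in> M \<Longrightarrow> b \<in> M \<Longrightarrow> (\<lambda>i. a i + b i) \<in> M"
    and "\<And>a. a \<in> M \<Longrightarrow> (\<lambda>i. - a i) \<in> M"
  shows "additive_subgroup M"
  using assms by (simp add: additive_subgroup_def zero_fun_def plus_fun_def fun_Compl_def)

lemma mem_coset_self: "additive_subgroup M \<Longrightarrow> y \<in> coset M y"
  unfolding coset_def using additive_subgroup_funD(1) by force

lemma coset_shift:
  assumes M: "additive_subgroup M" and m: "m \<in> M"
  shows "coset M (\<lambda>i. y i + m i) = coset M y"
proof (intro equalityI subsetI)
  fix w assume "w \<in> coset M (\<lambda>i. y i + m i)"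
  then obtain m' where "m' \<in> M" "w = (\<lambda>i. y i + m i + m' i)" by (auto simp: coset_def)
  moreover have "(\<lambda>i. m i + m' i) \<in> M" using additive_subgroup_funD(2)[OF M m \<open>m' \<in> M\<close>] .
  ultimately show "w \<in> coset M y" unfolding coset_def by (force simp: add.assoc)
next
  fix w assume "w \<in> coset M y"
  then obtain m' where "m' \<in> M" "w = (\<lambda>i. y i + m' i)" by (auto simp: coset_def)
  moreover have "(\<lambda>i. - m i + m' i) \<in> M"
    using additive_subgroup_funD(2,3)[OF M] m \<open>m' \<in> M\<close> by blast
  ultimately show "w \<in> coset M (\<lambda>i. y i + m i)" unfolding coset_def
    by (force simp: algebra_simps)
qed

lemma Fspan_subset_FG: "M \<subseteq> FG n \<Longrightarrow> Fspan M \<subseteq> FG n"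
  by (fastforce simp: Fspan_def FG_def intro!: sum.neutral)

lemma Fspan_add_mem:
  assumes "u \<in> Fspan M" "m \<in> M"
  shows "(\<lambda>i. u i + m i) \<in> Fspan M"
proof -
  obtain S c where S: "finite S" "S \<subseteq> M" "u = (\<lambda>i. \<Sum>m\<in>S. c m * m i)"
    using assms(1) by (auto simp: Fspan_def)
  define c' where "c' = (\<lambda>x. (if x \<in> S then c x else 0) + (if x = m then 1 else 0))"
  have "(\<Sum>x\<in>insert m S. c' x * x i) = (\<Sum>x\<in>insert m S. if x \<in> S then c x * x i else 0)
      + (\<Sum>x\<in>insert m S. if x = m then x i else 0)" for i
    unfolding c'_def sum.distrib[symmetric] by (intro sum.cong) (simp_all add: distrib_right)
  also have "\<dots> i = u i + m i" for i
    using S(1) by (simp add: S(3) sum.inter_restrict[symmetric] Int_absorb1 subset_insertI)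
  finally have "u i + m i = (\<Sum>x\<in>insert m S. c' x * x i)" for i ..
  moreover have "finite (insert m S)" "insert m S \<subseteq> M" using S assms(2) by auto
  ultimately show ?thesis unfolding Fspan_def by blast
qed

lemma int_shift_mod:
  fixes a b n :: nat
  assumes "b \<le> n"
  shows "int ((a + n - b) mod n) = (int a - int b) mod int n"
proof -
  have "int ((a + n - b) mod n) = (int a - int b + int n) mod int n"
    using assms by (simp add: zmod_int of_nat_diff algebra_simps)
  then show ?thesis by simp
qed

lemma shift_mod_commute:
  fixes a b i n :: nat
  assumes "a \<le> n" "b \<le> n"
  shows "((i + n - a) mod n + n - b) mod n = ((i + n - b) mod n + n - a) mod n"
proof -
  have "int (((x + n - c) mod n + n - d) mod n) = (int x - int c - int d) mod int n"
    if "c \<le> n" "d \<le> n" for x c d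
    using that by (simp add: int_shift_mod mod_diff_left_eq)
  from this[where x = i and c = a and d = b] this[where x = i and c = b and d = a] assms
  have "int (((i + n - a) mod n + n - b) mod n) = int (((i + n - b) mod n + n - a) mod n)"
    by (simp add: algebra_simps)
  then show ?thesis by simp
qed

lemma block_index_less_iff:
  fixes r k p q :: nat
  assumes "r < q * p" "k < q"
  shows "(r + q * p - k * p) mod (q * p) < p \<longleftrightarrow> k = r div p"
proof -
  define d where "d = r div p"
  define s where "s = r mod p"
  have p: "0 < p" using assms(1) by (cases p) auto
  have d: "d < q" unfolding d_def using assms(1) by (rule less_mult_imp_div_less)
  have s: "s < p" unfolding s_def using p by (rule mod_less_divisor)
  have "(d + q - k) * p = d * p + q * p - k * p"
    by (simp only: diff_mult_distrib add_mult_distrib)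
  moreover have "k * p \<le> q * p" using assms(2) by simp
  ultimately have a: "r + q * p - k * p = (d + q - k) * p + s"
    using div_mult_mod_eq[of r p] unfolding d_def s_def by linarith
  have "(r + q * p - k * p) mod (p * q) = p * ((d + q - k) mod q) + s"
    unfolding mod_mult2_eq a using p s by simp
  moreover have "(d + q - k) mod q = 0 \<longleftrightarrow> k = d"
  proof (cases "k \<le> d")
    case True
    then have "(d + q - k) mod q = (d - k + q) mod q" by (simp only: Nat.diff_add_assoc2)
    also have "\<dots> = d - k" using d by simp
    finally show ?thesis using True by auto
  next
    case False
    then have "(d + q - k) mod q = d + q - k" using assms(2) by simp
    then show ?thesis using False assms(2) by simp
  qed
  moreover have "p * m + s < p \<longleftrightarrow> m = 0" for m
    using s by (cases m) simp_all
  ultimately show ?thesis by (simp add: mult.commute[of q p] d_def)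
qed

definition gact_sum :: "nat \<Rightarrow> nat \<Rightarrow> nat \<Rightarrow> (nat \<Rightarrow> 'f::field) \<Rightarrow> (nat \<Rightarrow> 'f)" where
  "gact_sum n g k x = (\<lambda>i. \<Sum>j<k. gact n (j * g) x i)"

definition group_sum :: "nat \<Rightarrow> (nat \<Rightarrow> 'f::field)" where
  "group_sum n = (\<lambda>i. if i < n then 1 else 0)"

lemma gact_mod [simp]: "gact n (g mod n) = gact n g"
  by (simp add: gact_def fun_eq_iff)

lemma gact_0: "y \<in> FG n \<Longrightarrow> gact n 0 y = y"
  by (auto simp: gact_def FG_def fun_eq_iff)

lemma gact_conv: "gact n g (conv n c w) = conv n c (gact n g w)"
proof (rule ext)
  fix i
  show "gact n g (conv n c w) i = conv n c (gact n g w) i"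
  proof (cases "i < n")
    case True
    then have g: "g mod n \<le> n" by (simp add: less_imp_le)
    have "gact n g (conv n c w) i = (\<Sum>j<n. c j * w (((i + n - g mod n) mod n + n - j) mod n))"
      using True by (simp add: gact_def conv_def)
    also have "\<dots> = (\<Sum>j<n. c j * w (((i + n - j) mod n + n - g mod n) mod n))"
      using g by (intro sum.cong refl) (simp add: shift_mod_commute)
    also have "\<dots> = conv n c (gact n g w) i"
      using True by (simp add: gact_def conv_def)
    finally show ?thesis .
  qed (simp add: gact_def conv_def)
qed

lemma gact_sum_conv: "gact_sum n g k (conv n c w) = conv n c (gact_sum n g k w)"
proof (rule ext)
  fix i
  show "gact_sum n g k (conv n c w) i = conv n c (gact_sum n g k w) i"
  proof (cases "i < n")
    case True
    have "gact_sum n g k (conv n c w) i = (\<Sum>j<k. \<Sum>l<n. c l * gact n (j * g) w ((i + n - l) mod n))"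
      unfolding gact_sum_def gact_conv using True by (simp add: conv_def)
    also have "\<dots> = conv n c (gact_sum n g k w) i"
      using True by (simp add: gact_sum_def conv_def sum_distrib_left sum.swap[of _ "{..<k}"])
    finally show ?thesis .
  qed (simp add: gact_sum_def gact_def conv_def)
qed

text \<open>The translates \<open>a^(k p) \<Phi>(a)\<close>, \<open>k < q\<close>, tile the cyclic group of order \<open>q p\<close>.\<close>

lemma gact_sum_Phi: "gact_sum (q * p) p q (Phi p) = group_sum (q * p)"
proof (rule ext)
  fix i
  show "gact_sum (q * p) p q (Phi p) i = group_sum (q * p) i"
  proof (cases "i < q * p")
    case True
    have "gact (q * p) (k * p) (Phi p) i = (if k = i div p then 1 else 0)" if "k \<in> {..<q}" for k
    proof -
      from that have k: "k < q" by simp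
      have "k * p mod (q * p) = k * p" using k True by simp
      then show ?thesis
        unfolding gact_def Phi_def using True block_index_less_iff[OF True k] by (simp only: if_True)
    qed
    then have "gact_sum (q * p) p q (Phi p) i = (\<Sum>k<q. if k = i div p then 1 else 0)"
      unfolding gact_sum_def by (rule sum.cong[OF refl])
    also have "\<dots> = 1"
      using True by (simp add: less_mult_imp_div_less)
    finally show ?thesis using True by (simp add: group_sum_def)
  qed (simp add: gact_sum_def gact_def group_sum_def)
qed

lemma conv_group_sum: "conv n c (group_sum n) = (\<lambda>i. sum c {..<n} * group_sum n i)"
  by (auto simp: conv_def group_sum_def fun_eq_iff)

lemma gact_sum_lincomb:
  "gact_sum n g k (\<lambda>i. \<Sum>m\<in>S. f m * m i) = (\<lambda>i. \<Sum>m\<in>S. f m * gact_sum n g k m i)"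
proof -
  have "gact n h (\<lambda>i. \<Sum>m\<in>S. f m * m i) i = (\<Sum>m\<in>S. f m * gact n h m i)" for h i
    by (simp add: gact_def)
  then show ?thesis
    by (simp add: gact_sum_def sum_distrib_left sum.swap[of _ S])
qed

lemma gact_sum_add_scaled:
  "gact_sum n g k (\<lambda>i. y i + c * z i) = (\<lambda>i. gact_sum n g k y i + c * gact_sum n g k z i)"
proof -
  have "gact n h (\<lambda>i. y i + c * z i) i = gact n h y i + c * gact n h z i" for h i
    by (simp add: gact_def)
  then show ?thesis
    by (simp add: gact_sum_def sum.distrib sum_distrib_left)
qed

lemma conv_unit:
  assumes "w \<in> FG n"
  shows "conv n (\<lambda>j. if j = 0 then l else 0) w = (\<lambda>i. l * w i)"
proof (rule ext)
  fix i
  show "conv n (\<lambda>j. if j = 0 then l else 0) w i = l * w i"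
  proof (cases "i < n")
    case True
    then have "conv n (\<lambda>j. if j = 0 then l else 0) w i
        = (\<Sum>j<n. if j = 0 then l * w ((i + n - j) mod n) else 0)"
      unfolding conv_def by (simp add: if_distrib[of "\<lambda>x. x * _"] cong: if_cong)
    also have "\<dots> = l * w i" using True by (simp add: sum.delta)
    finally show ?thesis .
  qed (use assms in \<open>simp add: conv_def FG_def\<close>)
qed

lemma conv_add_left: "conv n (\<lambda>j. c j + d j) w = (\<lambda>i. conv n c w i + conv n d w i)"
  by (simp add: conv_def sum.distrib distrib_right fun_eq_iff)

lemma conv_uminus_left: "conv n (\<lambda>j. - c j) w = (\<lambda>i. - conv n c w i)"
  by (simp add: conv_def sum_negf fun_eq_iff)

lemma Phi_in_FG: "Phi p \<in> FG (p\<^sup>2)"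
  by (cases p) (auto simp: FG_def Phi_def power2_eq_square)

lemma U0_subset_FG: "U0 p K \<subseteq> FG (p\<^sup>2)"
  by (auto simp: U0_def conv_def FG_def)

lemma additive_subgroup_U0:
  assumes K: "additive_subgroup K"
  shows "additive_subgroup (U0 p K)"
proof (rule additive_subgroup_funI)
  have "(\<lambda>j. 0) \<in> RG (p\<^sup>2) K" using K by (simp add: RG_def FG_def additive_subgroup_def)
  moreover have "(\<lambda>i. 0) = conv (p\<^sup>2) (\<lambda>j. 0) (Phi p)" by (simp add: conv_def fun_eq_iff)
  ultimately show "(\<lambda>i. 0) \<in> U0 p K" unfolding U0_def by blast
next
  fix a b assume "a \<in> U0 p K" "b \<in> U0 p K"
  then obtain c d where cd: "c \<in> RG (p\<^sup>2) K" "d \<in> RG (p\<^sup>2) K"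
    and ab: "a = conv (p\<^sup>2) c (Phi p)" "b = conv (p\<^sup>2) d (Phi p)"
    by (auto simp: U0_def)
  have "(\<lambda>j. c j + d j) \<in> RG (p\<^sup>2) K"
    using cd K by (simp add: RG_def FG_def additive_subgroup_def)
  then show "(\<lambda>i. a i + b i) \<in> U0 p K"
    unfolding U0_def ab conv_add_left[symmetric] by blast
next
  fix a assume "a \<in> U0 p K"
  then obtain c where c: "c \<in> RG (p\<^sup>2) K" and a: "a = conv (p\<^sup>2) c (Phi p)"
    by (auto simp: U0_def)
  have "(\<lambda>j. - c j) \<in> RG (p\<^sup>2) K"
    using c K by (simp add: RG_def FG_def additive_subgroup_def)
  then show "(\<lambda>i. - a i) \<in> U0 p K"
    unfolding U0_def a conv_uminus_left[symmetric] by blast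
qed

lemma U0_coeff:
  assumes K: "additive_subgroup K" and m: "m \<in> U0 p K"
  shows "m i \<in> K"
proof -
  obtain c where c: "c \<in> RG (p\<^sup>2) K" "m = conv (p\<^sup>2) c (Phi p)"
    using m by (auto simp: U0_def)
  have "c j * Phi p l \<in> K" if "j < p\<^sup>2" for j l
    using c(1) that K by (simp add: RG_def Phi_def additive_subgroup_def)
  moreover have "0 \<in> K" using K by (simp add: additive_subgroup_def)
  ultimately show ?thesis
    unfolding c(2) conv_def by (auto intro!: additive_subgroup_sum[OF K])
qed

lemma scaled_Phi_in_U0:
  assumes "0 < p" "0 \<in> K" "l \<in> K"
  shows "(\<lambda>i. l * Phi p i) \<in> U0 p K"
proof -
  have "(\<lambda>j. if j = 0 then l else 0) \<in> RG (p\<^sup>2) K" using assms by (simp add: RG_def FG_def)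
  then show ?thesis
    unfolding U0_def conv_unit[OF Phi_in_FG, symmetric] by blast
qed

lemma gact_sum_U0:
  assumes "0 < p" "m \<in> U0 p K"
  shows "gact_sum (p\<^sup>2) p p m = (\<lambda>i. gact_sum (p\<^sup>2) p p m 0 * group_sum (p\<^sup>2) i)"
proof -
  obtain c where m: "m = conv (p\<^sup>2) c (Phi p)" using assms(2) by (auto simp: U0_def)
  have "gact_sum (p\<^sup>2) p p m = (\<lambda>i. sum c {..<p\<^sup>2} * group_sum (p\<^sup>2) i)"
    unfolding m gact_sum_conv gact_sum_Phi[of p p, folded power2_eq_square] by (rule conv_group_sum)
  then show ?thesis using assms(1) by (simp add: group_sum_def)
qed

lemma gact_sum_Fspan_U0:
  fixes K :: "'f::field set"
  assumes "0 < p" "y \<in> Fspan (U0 p K)"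
  shows "gact_sum (p\<^sup>2) p p y = (\<lambda>i. gact_sum (p\<^sup>2) p p y 0 * group_sum (p\<^sup>2) i)"
proof -
  obtain S f where S: "S \<subseteq> U0 p K" "y = (\<lambda>i. \<Sum>m\<in>S. f m * m i)"
    using assms(2) by (auto simp: Fspan_def)
  define l :: "(nat \<Rightarrow> 'f) \<Rightarrow> 'f" where "l m = gact_sum (p\<^sup>2) p p m 0" for m
  have "gact_sum (p\<^sup>2) p p m i = l m * group_sum (p\<^sup>2) i" if "m \<in> S" for m i
    unfolding l_def using gact_sum_U0[OF assms(1) subsetD[OF S(1) that]] by (rule fun_cong)
  then have "gact_sum (p\<^sup>2) p p y i = (\<Sum>m\<in>S. f m * l m) * group_sum (p\<^sup>2) i" for i
    unfolding S(2) gact_sum_lincomb sum_distrib_right mult.assoc by (intro sum.cong refl) simp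
  moreover have "group_sum (p\<^sup>2) 0 = (1::'f)" using assms(1) by (simp add: group_sum_def)
  ultimately show ?thesis by (simp add: fun_eq_iff)
qed

lemma coset_rep_with_gact_sum_zero:
  fixes K :: "'f::field set"
  assumes p: "0 < p" and K: "additive_subgroup K"
    and y: "y \<in> Fspan (U0 p K)" "gact_sum (p\<^sup>2) p p y \<in> U0 p K"
  shows "\<exists>x\<in>Fspan (U0 p K). coset (U0 p K) x = coset (U0 p K) y \<and> gact_sum (p\<^sup>2) p p x = (\<lambda>i. 0)"
proof -
  define l where "l = gact_sum (p\<^sup>2) p p y 0"
  have "- l \<in> K" using U0_coeff[OF K y(2)] K by (simp add: l_def additive_subgroup_def)
  then have lPhi: "(\<lambda>i. - l * Phi p i) \<in> U0 p K"
    using K by (intro scaled_Phi_in_U0[OF p]) (simp_all add: additive_subgroup_def)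
  define x where "x = (\<lambda>i. y i + - l * Phi p i)"
  have "gact_sum (p\<^sup>2) p p x = (\<lambda>i. 0)"
    unfolding x_def gact_sum_add_scaled gact_sum_Fspan_U0[OF p y(1), folded l_def]
      gact_sum_Phi[of p p, folded power2_eq_square] by simp
  then show ?thesis
    using Fspan_add_mem[OF y(1) lPhi] coset_shift[OF additive_subgroup_U0[OF K] lPhi]
    unfolding x_def by blast
qed

text \<open>\<open>T(1) = T(1) + T(1)\<close> forces \<open>T(1)\<close> to be the zero coset.\<close>

lemma cocycle_T0_subset:
  assumes coc: "cocycle n M T" and n: "0 < n" and M: "additive_subgroup M" "M \<subseteq> FG n"
  shows "T 0 \<subseteq> M"
proof -
  obtain z where z: "z \<in> Fspan M" "T 0 = coset M z"
    using coc n by (auto simp: cocycle_def hat_def)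
  have "gact n 0 z = z" using gact_0 Fspan_subset_FG[OF M(2)] z(1) by blast
  moreover have "z \<in> T 0" using z(2) mem_coset_self[OF M(1)] by simp
  ultimately have "(\<lambda>i. z i + z i) \<in> cadd (cact n 0 (T 0)) (T 0)"
    unfolding cadd_def cact_def by force
  moreover have "cadd (cact n 0 (T 0)) (T 0) = T 0"
    using coc n unfolding cocycle_def by (metis add_0 mod_0)
  ultimately obtain m where m: "m \<in> M" "(\<lambda>i. z i + z i) = (\<lambda>i. z i + m i)"
    using z(2) by (auto simp: coset_def)
  from m(2) have "z = m" by (simp add: fun_eq_iff)
  with m(1) have "z \<in> M" by simp
  then show ?thesis
    using z(2) additive_subgroup_funD(2)[OF M(1)] by (auto simp: coset_def)
qed

lemma cocycle_gact_sum:
  assumes coc: "cocycle n M T" and g: "g < n" and y: "y \<in> T g" "y \<in> FG n"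
  shows "gact_sum n g (Suc k) y \<in> T (Suc k * g mod n)"
proof (induction k)
  case 0
  then show ?case using y g by (simp add: gact_sum_def gact_0)
next
  case (Suc k)
  let ?h = "Suc k * g mod n"
  have h: "?h < n" using g by simp
  have "T ((?h + g) mod n) = cadd (cact n ?h (T g)) (T ?h)"
    using coc h g unfolding cocycle_def by blast
  moreover have "(\<lambda>i. gact n ?h y i + gact_sum n g (Suc k) y i) \<in> cadd (cact n ?h (T g)) (T ?h)"
    using Suc.IH y(1) unfolding cadd_def cact_def by blast
  moreover have "gact_sum n g (Suc (Suc k)) y = (\<lambda>i. gact n ?h y i + gact_sum n g (Suc k) y i)"
    by (simp add: gact_sum_def fun_eq_iff add.commute)
  moreover have "(?h + g) mod n = Suc (Suc k) * g mod n"
    by (metis mod_add_left_eq mult_Suc add.commute)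
  ultimately show ?case by simp
qed

lemma cocycle_gact_sum_mem:
  assumes coc: "cocycle n M T" and M: "additive_subgroup M" "M \<subseteq> FG n"
    and g: "g < n" "q * g mod n = 0" "0 < q" and y: "y \<in> T g" "y \<in> FG n"
  shows "gact_sum n g q y \<in> M"
proof -
  have "gact_sum n g (Suc (q - 1)) y \<in> T (Suc (q - 1) * g mod n)"
    using cocycle_gact_sum[OF coc g(1) y] .
  then have "gact_sum n g q y \<in> T 0" using g by simp
  then show ?thesis using cocycle_T0_subset[OF coc _ M] g(1) by auto
qed

lemma crys_pow_eq: "crys_pow n (g, x) k = (k * g mod n, gact_sum n g k x)"
proof (induction k)
  case 0
  then show ?case by (simp add: crys_pow_def crys_one_def gact_sum_def)
next
  case (Suc k)
  have "crys_pow n (g, x) (Suc k) = crys_mult n (g, x) (crys_pow n (g, x) k)"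
    by (simp add: crys_pow_def)
  also have "\<dots> = (Suc k * g mod n, gact_sum n g (Suc k) x)"
    unfolding Suc by (simp add: crys_mult_def gact_sum_def mod_add_right_eq add.commute)
  finally show ?case .
qed

lemma crys_order:
  assumes "q * g mod n = 0" "\<And>k. 0 < k \<Longrightarrow> k < q \<Longrightarrow> k * g mod n \<noteq> 0"
    and "gact_sum n g q x = (\<lambda>i. 0)"
  shows "crys_pow n (g, x) q = crys_one \<and> (\<forall>k. 0 < k \<and> k < q \<longrightarrow> crys_pow n (g, x) k \<noteq> crys_one)"
  using assms by (simp add: crys_pow_eq crys_one_def)

theorem lemma11:
  fixes p :: nat and K :: "'f::field set" and T :: "nat \<Rightarrow> (nat \<Rightarrow> 'f) set"
  assumes "prime p"
    and "is_K p K"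
    and "cocycle (p^2) (U0 p K) T"
  shows "\<exists>e\<in>Crys (p^2) (U0 p K) T.
           crys_pow (p^2) e p = crys_one \<and>
           (\<forall>k. 0 < k \<and> k < p \<longrightarrow> crys_pow (p^2) e k \<noteq> crys_one)"
proof -
  let ?n = "p\<^sup>2" and ?M = "U0 p K"
  have p: "0 < p" "p < ?n"
    using prime_gt_1_nat[OF assms(1)] by (simp_all add: power2_eq_square)
  have K: "additive_subgroup K" using is_K_additive_subgroup[OF assms(1,2)] .
  have M: "additive_subgroup ?M" "?M \<subseteq> FG ?n" using additive_subgroup_U0[OF K] U0_subset_FG .
  obtain y where y: "y \<in> Fspan ?M" "T p = coset ?M y"
    using assms(3) p(2) by (auto simp: cocycle_def hat_def)
  have "gact_sum ?n p p y \<in> ?M"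
    using cocycle_gact_sum_mem[OF assms(3) M p(2)] mem_coset_self[OF M(1)] y p(1)
      Fspan_subset_FG[OF M(2)] by (auto simp: power2_eq_square)
  then obtain x where x: "x \<in> Fspan ?M" "coset ?M x = T p" "gact_sum ?n p p x = (\<lambda>i. 0)"
    using coset_rep_with_gact_sum_zero[OF p(1) K y(1)] y(2) by auto
  have "(p, x) \<in> Crys ?n ?M T" using p(2) x(1,2) by (simp add: Crys_def)
  moreover have "crys_pow ?n (p, x) p = crys_one \<and>
      (\<forall>k. 0 < k \<and> k < p \<longrightarrow> crys_pow ?n (p, x) k \<noteq> crys_one)"
    using x(3) by (intro crys_order) (simp_all add: power2_eq_square)
  ultimately show ?thesis by blast
qed

end
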